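(* Let $T\in\mathrm{Aut}(X,\mu)$ be aperiodic and $\varphi$ a metric-compatible function. For every $U\in[T]_\varphi$ and every measurable $A\subseteq X$, one has $d_{\varphi,T}(U_A,\mathrm{id})\le d_{\varphi,T}(U,\mathrm{id})$; in particular $U_A\in[T]_\varphi$.
   Context: $(X,\mu)$ standard atomless probability space; $\mathrm{Aut}(X,\mu)$ measure-preserving transformations modulo null sets. For aperiodic $T$, $[T]$ is the set of $U\in\mathrm{Aut}(X,\mu)$ with $U(x)=T^{c_U(x)}(x)$ a.e. for a measurable $c_U:X\to\mathbb Z$. $\varphi:\mathbb R_+\to\mathbb R_+$ is metric-compatible if subadditive, non-decreasing, $\varphi(0)=0$, $\varphi(t)>0$ for $t>0$. $[T]_\varphi=\{U\in[T]:\int_X\varphi(|c_U|)d\mu<\infty\}$, $d_{\varphi,T}(U,V)=\int_X\varphi(|c_U(x)-c_V(x)|)d\mu$. For $U\in\mathrm{Aut}(X,\mu)$ and measurable $A$, the first return map $U_A$ is defined by $U_A(x)=U^{n(x)}(x)$ with $n(x)=\min\{n\ge1:U^n(x)\in A\}$ for $x\in A$ (defined a.e. by Poincaré recurrence) and $U_A(x)=x$ for $x\notin A$. *)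

theory Defs
  imports "HOL-Analysis.Analysis"
begin

text \<open>The standard atomless probability space (X,mu), modelled (up to isomorphism)
  by the unit interval with Lebesgue (Borel) measure.\<close>
definition X\<mu> :: "real measure" where
  "X\<mu> = restrict_space lborel {0..1}"

definition Aut :: "(real \<Rightarrow> real) set" where
  "Aut = {U. U \<in> measurable X\<mu> X\<mu> \<and> distr X\<mu> X\<mu> U = X\<mu> \<and>
     (\<exists>V \<in> measurable X\<mu> X\<mu>. (AE x in X\<mu>. V (U x) = x) \<and> (AE x in X\<mu>. U (V x) = x))}"

definition aperiodic :: "(real \<Rightarrow> real) \<Rightarrow> bool" where
  "aperiodic T \<longleftrightarrow> (\<forall>n::nat. n \<ge> 1 \<longrightarrow> (AE x in X\<mu>. (T ^^ n) x \<noteq> x))"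

text \<open>c is a cocycle for U, i.e. U(x) = T^(c x)(x) a.e.; for negative c x this is
  expressed as T^(-c x)(U x) = x (T being invertible mod null sets).\<close>
definition is_cocycle :: "(real \<Rightarrow> real) \<Rightarrow> (real \<Rightarrow> real) \<Rightarrow> (real \<Rightarrow> int) \<Rightarrow> bool" where
  "is_cocycle T U c \<longleftrightarrow> c \<in> measurable X\<mu> (count_space UNIV) \<and>
     (AE x in X\<mu>. (c x \<ge> 0 \<longrightarrow> (T ^^ nat (c x)) x = U x) \<and>
                   (c x < 0 \<longrightarrow> (T ^^ nat (- c x)) (U x) = x))"

definition full_group :: "(real \<Rightarrow> real) \<Rightarrow> (real \<Rightarrow> real) set" where
  "full_group T = {U \<in> Aut. \<exists>c. is_cocycle T U c}"

definition cocycle :: "(real \<Rightarrow> real) \<Rightarrow> (real \<Rightarrow> real) \<Rightarrow> real \<Rightarrow> int" where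
  "cocycle T U = (SOME c. is_cocycle T U c)"

definition metric_compatible :: "(real \<Rightarrow> real) \<Rightarrow> bool" where
  "metric_compatible \<phi> \<longleftrightarrow>
     (\<forall>s\<ge>0. \<forall>t\<ge>0. \<phi> (s + t) \<le> \<phi> s + \<phi> t) \<and>
     (\<forall>s t. 0 \<le> s \<longrightarrow> s \<le> t \<longrightarrow> \<phi> s \<le> \<phi> t) \<and>
     \<phi> 0 = 0 \<and> (\<forall>t>0. \<phi> t > 0)"

definition d_phi :: "(real \<Rightarrow> real) \<Rightarrow> (real \<Rightarrow> real) \<Rightarrow> (real \<Rightarrow> real) \<Rightarrow> (real \<Rightarrow> real) \<Rightarrow> ennreal" where
  "d_phi \<phi> T U V = (\<integral>\<^sup>+ x. ennreal (\<phi> (real_of_int \<bar>cocycle T U x - cocycle T V x\<bar>)) \<partial>X\<mu>)"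

definition full_group_phi :: "(real \<Rightarrow> real) \<Rightarrow> (real \<Rightarrow> real) \<Rightarrow> (real \<Rightarrow> real) set" where
  "full_group_phi \<phi> T = {U \<in> full_group T.
      (\<integral>\<^sup>+ x. ennreal (\<phi> (real_of_int \<bar>cocycle T U x\<bar>)) \<partial>X\<mu>) < \<infinity>}"

definition first_return :: "(real \<Rightarrow> real) \<Rightarrow> real set \<Rightarrow> real \<Rightarrow> real" where
  "first_return U A x =
     (if x \<in> A \<and> (\<exists>n::nat. n \<ge> 1 \<and> (U ^^ n) x \<in> A)
      then (U ^^ (LEAST n::nat. n \<ge> 1 \<and> (U ^^ n) x \<in> A)) x else x)"

end

theory Submission
  imports Defs
begin

text \<open>The induced map U_A is measure preserving: on the set where the return time is n it
  acts as U^n, and by Poincare recurrence the images of these level sets under U^n partition A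
  up to a null set; the induced map of the inverse V of U is an a.e. inverse of U_A.
  If c is the cocycle of U, the cocycle of U_A at x is the sum of c along x, U x, ... up to the
  return time n(x), so subadditivity of phi gives phi |c_A x| <= (sum i < n(x). phi |c (U^i x)|).
  Transport the i-th term by U^i: a point is then met by at most one term, because the
  preimages under V^i of the sets of points of A that have not returned by time i are pairwise
  disjoint. Hence the integral of phi |c_A| is at most that of phi |c|, and by aperiodicity
  cocycles are unique a.e., so these integrals are the distances to the identity.\<close>

definition int_iter_eq :: "('a \<Rightarrow> 'a) \<Rightarrow> int \<Rightarrow> 'a \<Rightarrow> 'a \<Rightarrow> bool" where
  "int_iter_eq T k x y \<longleftrightarrow> (k \<ge> 0 \<longrightarrow> (T ^^ nat k) x = y) \<and> (k < 0 \<longrightarrow> (T ^^ nat (- k)) y = x)"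

text \<open>Unlike int_iter_eq, this relation is transitive without any invertibility of T; the two
  agree at points along whose forward orbits W inverts T.\<close>
definition orbit_shift :: "('a \<Rightarrow> 'a) \<Rightarrow> int \<Rightarrow> 'a \<Rightarrow> 'a \<Rightarrow> bool" where
  "orbit_shift T k x y \<longleftrightarrow> (\<exists>m n. k = int m - int n \<and> (T ^^ m) x = (T ^^ n) y)"

definition orbit_left_inverse :: "('a \<Rightarrow> 'a) \<Rightarrow> ('a \<Rightarrow> 'a) \<Rightarrow> 'a \<Rightarrow> bool" where
  "orbit_left_inverse W T x \<longleftrightarrow> (\<forall>i. W (T ((T ^^ i) x)) = (T ^^ i) x)"

lemma int_iter_eq_zero [simp]: "int_iter_eq T 0 x y \<longleftrightarrow> y = x"
  unfolding int_iter_eq_def by auto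

lemma int_iter_eq_imp_orbit_shift:
  assumes "int_iter_eq T k x y"
  shows "orbit_shift T k x y"
proof (cases "k \<ge> 0")
  case True
  with assms show ?thesis
    unfolding int_iter_eq_def orbit_shift_def by (intro exI[of _ "nat k"] exI[of _ 0]) simp
next
  case False
  with assms show ?thesis
    unfolding int_iter_eq_def orbit_shift_def by (intro exI[of _ 0] exI[of _ "nat (- k)"]) simp
qed

lemma orbit_shift_refl: "orbit_shift T 0 x x"
  unfolding orbit_shift_def by (rule exI[of _ 0]) simp

lemma orbit_shift_sym: "orbit_shift T k x y \<Longrightarrow> orbit_shift T (- k) y x"
  unfolding orbit_shift_def by force

lemma orbit_shift_trans:
  assumes "orbit_shift T a x y" and "orbit_shift T b y z"
  shows "orbit_shift T (a + b) x z"
proof -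
  obtain m n where a: "a = int m - int n" and mn: "(T ^^ m) x = (T ^^ n) y"
    using assms(1) unfolding orbit_shift_def by blast
  obtain p q where b: "b = int p - int q" and pq: "(T ^^ p) y = (T ^^ q) z"
    using assms(2) unfolding orbit_shift_def by blast
  have "(T ^^ (m + p)) x = (T ^^ (n + q)) z"
    using mn pq by (metis add.commute comp_apply funpow_add)
  then show ?thesis
    unfolding orbit_shift_def using a b by (intro exI[of _ "m + p"] exI[of _ "n + q"]) simp
qed

lemma orbit_left_inverse_funpow:
  "orbit_left_inverse W T x \<Longrightarrow> orbit_left_inverse W T ((T ^^ j) x)"
  unfolding orbit_left_inverse_def by (metis comp_apply funpow_add)

lemma funpow_cancel:
  assumes "orbit_left_inverse W T x" and "orbit_left_inverse W T y" and "(T ^^ n) x = (T ^^ n) y"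
  shows "x = y"
  using assms(3)
proof (induction n)
  case (Suc n)
  then have "W (T ((T ^^ n) x)) = W (T ((T ^^ n) y))" by simp
  then show ?case
    using assms(1,2) Suc.IH unfolding orbit_left_inverse_def by metis
qed simp

lemma orbit_shift_imp_int_iter_eq:
  assumes x: "orbit_left_inverse W T x" and y: "orbit_left_inverse W T y"
    and "orbit_shift T k x y"
  shows "int_iter_eq T k x y"
proof -
  obtain m n where k: "k = int m - int n" and mn: "(T ^^ m) x = (T ^^ n) y"
    using assms(3) unfolding orbit_shift_def by blast
  show ?thesis
  proof (cases "n \<le> m")
    case True
    then have "(T ^^ n) ((T ^^ (m - n)) x) = (T ^^ n) y"
      using mn by (metis funpow_add le_add_diff_inverse comp_apply)
    then have "(T ^^ (m - n)) x = y"
      using funpow_cancel[OF orbit_left_inverse_funpow[OF x] y] by blast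
    moreover have "k = int (m - n)" using k True by (simp add: of_nat_diff)
    ultimately show ?thesis unfolding int_iter_eq_def by simp
  next
    case False
    then have "(T ^^ m) ((T ^^ (n - m)) y) = (T ^^ m) x"
      using mn by (metis funpow_add le_add_diff_inverse nat_le_linear comp_apply)
    then have "(T ^^ (n - m)) y = x"
      using funpow_cancel[OF orbit_left_inverse_funpow[OF y] x] by blast
    moreover have "k < 0" "nat (- k) = n - m" using k False by arith+
    ultimately show ?thesis unfolding int_iter_eq_def by simp
  qed
qed

lemma int_iter_eq_unique:
  assumes x: "orbit_left_inverse W T x" and not_periodic: "\<forall>n\<ge>1. (T ^^ n) x \<noteq> x"
    and "int_iter_eq T a x y" and "int_iter_eq T b x y"
  shows "a = b"
proof -
  have "orbit_shift T (a + - b) x x"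
    using assms(3,4) by (blast intro: orbit_shift_trans orbit_shift_sym int_iter_eq_imp_orbit_shift)
  then have "int_iter_eq T (a - b) x x"
    using orbit_shift_imp_int_iter_eq[OF x x] by simp
  moreover have "(T ^^ nat \<bar>a - b\<bar>) x \<noteq> x" if "a \<noteq> b"
    using not_periodic that by simp
  ultimately show ?thesis
    unfolding int_iter_eq_def by (cases "a - b \<ge> 0") auto
qed

definition returns :: "('a \<Rightarrow> 'a) \<Rightarrow> 'a set \<Rightarrow> 'a \<Rightarrow> bool" where
  "returns U A x \<longleftrightarrow> (\<exists>n\<ge>1. (U ^^ n) x \<in> A)"

definition return_time :: "('a \<Rightarrow> 'a) \<Rightarrow> 'a set \<Rightarrow> 'a \<Rightarrow> nat" where
  "return_time U A x = (LEAST n. n \<ge> 1 \<and> (U ^^ n) x \<in> A)"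

definition induced_map :: "('a \<Rightarrow> 'a) \<Rightarrow> 'a set \<Rightarrow> 'a \<Rightarrow> 'a" where
  "induced_map U A x = (if x \<in> A \<and> returns U A x then (U ^^ return_time U A x) x else x)"

definition return_time_eq :: "('a \<Rightarrow> 'a) \<Rightarrow> 'a set \<Rightarrow> nat \<Rightarrow> 'a set" where
  "return_time_eq U A n = {x \<in> A. 1 \<le> n \<and> (U ^^ n) x \<in> A \<and> (\<forall>k\<in>{1..<n}. (U ^^ k) x \<notin> A)}"

definition return_time_gt :: "('a \<Rightarrow> 'a) \<Rightarrow> 'a set \<Rightarrow> nat \<Rightarrow> 'a set" where
  "return_time_gt U A n = {x \<in> A. \<forall>k\<in>{1..n}. (U ^^ k) x \<notin> A}"

definition return_cocycle :: "('a \<Rightarrow> 'a) \<Rightarrow> 'a set \<Rightarrow> ('a \<Rightarrow> int) \<Rightarrow> 'a \<Rightarrow> int" where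
  "return_cocycle U A c x =
     (if x \<in> A \<and> returns U A x then (\<Sum>i<return_time U A x. c ((U ^^ i) x)) else 0)"

lemma first_return_eq_induced_map: "first_return = induced_map"
  by (auto simp: fun_eq_iff first_return_def induced_map_def returns_def return_time_def)

lemma returnsD:
  assumes "returns U A x"
  shows "1 \<le> return_time U A x" and "(U ^^ return_time U A x) x \<in> A"
    and "\<And>k. k \<in> {1..<return_time U A x} \<Longrightarrow> (U ^^ k) x \<notin> A"
proof -
  obtain n where "n \<ge> 1 \<and> (U ^^ n) x \<in> A" using assms unfolding returns_def by blast
  then have "return_time U A x \<ge> 1 \<and> (U ^^ return_time U A x) x \<in> A"
    unfolding return_time_def by (rule LeastI)
  then show "1 \<le> return_time U A x" "(U ^^ return_time U A x) x \<in> A" by auto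
  show "(U ^^ k) x \<notin> A" if "k \<in> {1..<return_time U A x}" for k
    using that not_less_Least unfolding return_time_def by force
qed

lemma return_timeI:
  assumes "1 \<le> n" and "(U ^^ n) x \<in> A" and "\<And>k. k \<in> {1..<n} \<Longrightarrow> (U ^^ k) x \<notin> A"
  shows "returns U A x" and "return_time U A x = n"
proof -
  show "returns U A x" using assms unfolding returns_def by blast
  show "return_time U A x = n" unfolding return_time_def
    by (rule Least_equality) (use assms in \<open>auto simp: not_less[symmetric]\<close>)
qed

lemma mem_return_time_eq_iff:
  "x \<in> return_time_eq U A n \<longleftrightarrow> x \<in> A \<and> returns U A x \<and> return_time U A x = n"
  unfolding return_time_eq_def using return_timeI[of n U x A] returnsD[of U A x] by auto

lemma return_time_gt_if_less_return_time:
  "x \<in> A \<Longrightarrow> returns U A x \<Longrightarrow> n < return_time U A x \<Longrightarrow> x \<in> return_time_gt U A n"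
  unfolding return_time_gt_def using returnsD(3)[of U A x] by auto

lemma suminf_ennreal_single:
  assumes "\<And>n. n \<noteq> m \<Longrightarrow> f n = 0"
  shows "(\<Sum>n. f n) = (f m :: ennreal)"
proof -
  have "f = (\<lambda>n. if n = m then f n else 0)" using assms by auto
  then show ?thesis using sums_unique[OF sums_single[of m f]] by metis
qed

lemma subadditive_sum_le:
  fixes g :: "'a::comm_monoid_add \<Rightarrow> 'b::ordered_comm_monoid_add"
  assumes "g 0 = 0" and "\<And>a b. g (a + b) \<le> g a + g b"
  shows "g (\<Sum>i\<in>S. f i) \<le> (\<Sum>i\<in>S. g (f i))"
proof (induction S rule: infinite_finite_induct)
  case (insert i S)
  have "g (f i + (\<Sum>i\<in>S. f i)) \<le> g (f i) + g (\<Sum>i\<in>S. f i)" by (rule assms(2))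
  also have "\<dots> \<le> g (f i) + (\<Sum>i\<in>S. g (f i))" using insert.IH by (rule add_left_mono)
  finally show ?case using insert.hyps by simp
qed (simp_all add: assms(1))

locale mp_automorphism = finite_measure M for M :: "'a measure" +
  fixes U V :: "'a \<Rightarrow> 'a"
  assumes measurable_U [measurable]: "U \<in> M \<rightarrow>\<^sub>M M"
    and measurable_V [measurable]: "V \<in> M \<rightarrow>\<^sub>M M"
    and distr_U: "distr M M U = M"
    and V_U: "AE x in M. V (U x) = x"
    and U_V: "AE x in M. U (V x) = x"
begin

lemma distr_V: "distr M M V = M"
proof (rule measure_eqI)
  fix B assume "B \<in> sets (distr M M V)"
  then have B [measurable]: "B \<in> sets M" by simp
  have "emeasure (distr M M V) B = emeasure (distr M M U) (V -` B \<inter> space M)"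
    by (simp add: emeasure_distr distr_U)
  also have "\<dots> = emeasure M (U -` (V -` B \<inter> space M) \<inter> space M)"
    by (rule emeasure_distr) auto
  also have "\<dots> = emeasure M B"
    by (rule emeasure_eq_AE)
       (use V_U in \<open>eventually_elim, use measurable_space[OF measurable_U] sets.sets_into_space[OF B] in auto\<close>)
  finally show "emeasure (distr M M V) B = emeasure M B" .
qed simp

lemma mp_automorphism_inverse: "mp_automorphism M V U"
  by unfold_locales (auto simp: distr_V V_U U_V)

lemma measurable_funpow_U [measurable]: "U ^^ n \<in> M \<rightarrow>\<^sub>M M"
  by (induction n) (auto simp: funpow_Suc_right)

lemma distr_funpow_U: "distr M M (U ^^ n) = M"
proof (induction n)
  case (Suc n)
  have "distr M M (U ^^ Suc n) = distr (distr M M U) M (U ^^ n)"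
    by (simp only: funpow_Suc_right distr_distr[OF measurable_funpow_U measurable_U])
  then show ?case using Suc distr_U by (simp only:)
qed (simp add: distr_id[unfolded id_def])

lemma AE_funpow_U: "AE x in M. P x \<Longrightarrow> AE x in M. P ((U ^^ n) x)"
  by (rule AE_distrD[OF measurable_funpow_U]) (simp only: distr_funpow_U)

lemma nn_integral_funpow_U:
  "f \<in> borel_measurable M \<Longrightarrow> (\<integral>\<^sup>+ x. f ((U ^^ n) x) \<partial>M) = (\<integral>\<^sup>+ x. f x \<partial>M)"
  using nn_integral_distr[OF measurable_funpow_U, of f n] by (simp add: distr_funpow_U)

lemma AE_orbit_left_inverse: "AE x in M. orbit_left_inverse V U x"
  unfolding orbit_left_inverse_def AE_all_countable by (blast intro: AE_funpow_U[OF V_U])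

lemma AE_funpow_U_funpow_V: "AE y in M. \<forall>n k. k \<le> n \<longrightarrow> (U ^^ k) ((V ^^ n) y) = (V ^^ (n - k)) y"
  using mp_automorphism.AE_orbit_left_inverse[OF mp_automorphism_inverse]
proof eventually_elim
  case (elim y)
  show ?case
  proof (intro allI)
    fix n k show "k \<le> n \<longrightarrow> (U ^^ k) ((V ^^ n) y) = (V ^^ (n - k)) y"
    proof (induction k)
      case (Suc k)
      show ?case
      proof
        assume "Suc k \<le> n"
        then have "(V ^^ (n - k)) y = V ((V ^^ (n - Suc k)) y)"
          by (metis Suc_diff_Suc Suc_le_lessD funpow.simps(2) comp_apply)
        then show "(U ^^ Suc k) ((V ^^ n) y) = (V ^^ (n - Suc k)) y"
          using Suc \<open>Suc k \<le> n\<close> elim unfolding orbit_left_inverse_def by simp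
      qed
    qed simp
  qed
qed

lemma nn_integral_funpow_transfer:
  assumes [measurable]: "g \<in> borel_measurable M" "h \<in> borel_measurable M"
  shows "(\<integral>\<^sup>+ x. g x * h ((U ^^ n) x) \<partial>M) = (\<integral>\<^sup>+ y. g ((V ^^ n) y) * h y \<partial>M)"
proof -
  have "(\<integral>\<^sup>+ y. g ((V ^^ n) y) * h y \<partial>M) = (\<integral>\<^sup>+ x. g ((V ^^ n) ((U ^^ n) x)) * h ((U ^^ n) x) \<partial>M)"
    by (rule nn_integral_funpow_U[symmetric]) measurable
  also have "\<dots> = (\<integral>\<^sup>+ x. g x * h ((U ^^ n) x) \<partial>M)"
    by (rule nn_integral_cong_AE) (use mp_automorphism.AE_funpow_U_funpow_V[OF mp_automorphism_inverse] in \<open>eventually_elim, auto\<close>)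
  finally show ?thesis by simp
qed

lemma suminf_nn_integral_funpow_transfer:
  assumes [measurable]: "\<And>n. S n \<in> sets M" "h \<in> borel_measurable M"
  shows "(\<Sum>n. \<integral>\<^sup>+ x. indicator (S n) x * h ((U ^^ n) x) \<partial>M)
       = (\<integral>\<^sup>+ y. (\<Sum>n. indicator (S n) ((V ^^ n) y)) * h y \<partial>M)"
proof -
  have "(\<Sum>n. \<integral>\<^sup>+ x. indicator (S n) x * h ((U ^^ n) x) \<partial>M)
      = (\<Sum>n. \<integral>\<^sup>+ y. indicator (S n) ((V ^^ n) y) * h y \<partial>M)"
    by (intro suminf_cong nn_integral_funpow_transfer) measurable
  also have "\<dots> = (\<integral>\<^sup>+ y. (\<Sum>n. indicator (S n) ((V ^^ n) y) * h y) \<partial>M)"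
    by (rule nn_integral_suminf[symmetric]) measurable
  finally show ?thesis by simp
qed

lemma poincare_recurrence:
  assumes A [measurable]: "A \<in> sets M"
  shows "AE x in M. x \<in> A \<longrightarrow> returns U A x"
proof -
  define W where "W = {x\<in>space M. x \<in> A \<and> (\<forall>n\<ge>1. (U ^^ n) x \<notin> A)}"
  have [measurable]: "W \<in> sets M" unfolding W_def by measurable
  define Wk where "Wk k = (U ^^ k) -` W \<inter> space M" for k
  have [measurable]: "Wk k \<in> sets M" for k unfolding Wk_def by measurable
  have measure_Wk: "measure M (Wk k) = measure M W" for k
    using emeasure_distr[OF measurable_funpow_U, of W k]
    unfolding Wk_def measure_def by (simp add: distr_funpow_U)
  have "Wk i \<inter> Wk j = {}" if "i < j" for i j
  proof -
    have "(U ^^ j) x = (U ^^ (j - i)) ((U ^^ i) x)" for x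
      using that by (metis funpow_add comp_apply le_add_diff_inverse2 less_imp_le)
    then show ?thesis using that unfolding Wk_def W_def by force
  qed
  then have "disjoint_family Wk"
    unfolding disjoint_family_on_def by (metis inf_commute linorder_neqE_nat)
  then have "real n * measure M W \<le> measure M (space M)" for n
  proof -
    have "real n * measure M W = measure M (\<Union>k<n. Wk k)"
      using measure_finite_Union[of "{..<n}" Wk M]
        disjoint_family_on_mono[OF subset_UNIV \<open>disjoint_family Wk\<close>]
      by (simp add: measure_Wk emeasure_finite image_subset_iff)
    then show ?thesis by (simp add: bounded_measure)
  qed
  then have "measure M W = 0"
    by (metis measure_nonneg order.antisym real_archimedian_rdiv_eq_0 mult.commute)
  then have "W \<in> null_sets M"
    by (simp add: emeasure_eq_measure null_sets_def)
  then show ?thesis by (rule AE_I') (auto simp: W_def returns_def)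
qed

lemma AE_suminf_indicator_funpow_V:
  assumes S: "\<And>i j x. i < j \<Longrightarrow> x \<in> S j \<Longrightarrow> (U ^^ (j - i)) x \<notin> S i"
  shows "AE y in M. (\<Sum>n. indicator (S n) ((V ^^ n) y))
                    = (if \<exists>m. (V ^^ m) y \<in> S m then 1 else (0::ennreal))"
  using AE_funpow_U_funpow_V
proof eventually_elim
  case (elim y)
  have unique: "i = j" if "(V ^^ i) y \<in> S i" "(V ^^ j) y \<in> S j" "i \<le> j" for i j
    using that elim S[of i j "(V ^^ j) y"] by (cases "i < j") auto
  show ?case
  proof (cases "\<exists>m. (V ^^ m) y \<in> S m")
    case True
    then obtain m where m: "(V ^^ m) y \<in> S m" by blast
    have "(\<Sum>n. indicator (S n) ((V ^^ n) y)) = (indicator (S m) ((V ^^ m) y) :: ennreal)"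
      by (rule suminf_ennreal_single) (use unique m in \<open>metis indicator_simps(2) nat_le_linear\<close>)
    with m True show ?thesis by simp
  qed simp
qed

context
  fixes A assumes A [measurable]: "A \<in> sets M"
begin

lemma measurable_returns [measurable]: "Measurable.pred M (returns U A)"
  unfolding returns_def by measurable

lemma measurable_return_time [measurable]: "return_time U A \<in> M \<rightarrow>\<^sub>M count_space UNIV"
  unfolding return_time_def by measurable

lemma sets_return_time_eq [measurable]: "return_time_eq U A n \<in> sets M"
proof -
  have "return_time_eq U A n
      = {x \<in> space M. x \<in> A \<and> 1 \<le> n \<and> (U ^^ n) x \<in> A \<and> (\<forall>k\<in>{1..<n}. (U ^^ k) x \<notin> A)}"
    using sets.sets_into_space[OF A] by (auto simp: return_time_eq_def)
  then show ?thesis by simp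
qed

lemma sets_return_time_gt [measurable]: "return_time_gt U A n \<in> sets M"
proof -
  have "return_time_gt U A n = {x \<in> space M. x \<in> A \<and> (\<forall>k\<in>{1..n}. (U ^^ k) x \<notin> A)}"
    using sets.sets_into_space[OF A] by (auto simp: return_time_gt_def)
  then show ?thesis by simp
qed

lemma measurable_induced_map [measurable]: "induced_map U A \<in> M \<rightarrow>\<^sub>M M"
proof -
  have [measurable]: "(\<lambda>x. (U ^^ return_time U A x) x) \<in> M \<rightarrow>\<^sub>M M"
    by (rule measurable_compose_countable[where f = "\<lambda>n x. (U ^^ n) x"]) measurable
  show ?thesis unfolding induced_map_def[abs_def] by measurable
qed

lemma AE_suminf_indicator_return_time_eq:
  "AE y in M. (\<Sum>n. indicator (return_time_eq U A n) ((V ^^ n) y)) = (indicator A y :: ennreal)"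
proof -
  have "AE y in M. (\<Sum>n. indicator (return_time_eq U A n) ((V ^^ n) y))
      = (if \<exists>m. (V ^^ m) y \<in> return_time_eq U A m then 1 else (0::ennreal))"
    by (rule AE_suminf_indicator_funpow_V) (auto simp: return_time_eq_def)
  with mp_automorphism.poincare_recurrence[OF mp_automorphism_inverse A]
    AE_funpow_U_funpow_V
  show ?thesis
  proof eventually_elim
    case (elim y)
    have "(\<exists>m. (V ^^ m) y \<in> return_time_eq U A m) \<longleftrightarrow> y \<in> A"
    proof
      assume "\<exists>m. (V ^^ m) y \<in> return_time_eq U A m"
      with elim(2) show "y \<in> A" by (auto simp: return_time_eq_def)
    next
      assume "y \<in> A"
      with elim(1) have returns: "returns V A y" by blast
      define m where "m = return_time V A y"
      have "(V ^^ m) y \<in> return_time_eq U A m"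
        using returnsD[OF returns, folded m_def] elim(2) \<open>y \<in> A\<close>
        by (auto simp: return_time_eq_def)
      then show "\<exists>m. (V ^^ m) y \<in> return_time_eq U A m" ..
    qed
    with elim(3) show ?case by simp
  qed
qed

lemma AE_suminf_indicator_return_time_gt:
  "AE y in M. (\<Sum>n. indicator (return_time_gt U A n) ((V ^^ n) y)) \<le> (1 :: ennreal)"
proof -
  have "AE y in M. (\<Sum>n. indicator (return_time_gt U A n) ((V ^^ n) y))
      = (if \<exists>m. (V ^^ m) y \<in> return_time_gt U A m then 1 else (0::ennreal))"
    by (rule AE_suminf_indicator_funpow_V) (auto simp: return_time_gt_def)
  then show ?thesis by eventually_elim simp
qed

lemma AE_induced_map_decomposition:
  fixes h :: "'a \<Rightarrow> ennreal"
  shows "AE x in M. h (induced_map U A x)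
    = indicator (- A) x * h x + (\<Sum>n. indicator (return_time_eq U A n) x * h ((U ^^ n) x))"
  using poincare_recurrence[OF A]
proof eventually_elim
  case (elim x)
  show ?case
  proof (cases "x \<in> A")
    case True
    with elim have "returns U A x" by blast
    have "(\<Sum>n. indicator (return_time_eq U A n) x * h ((U ^^ n) x))
        = indicator (return_time_eq U A (return_time U A x)) x * h ((U ^^ return_time U A x) x)"
      by (rule suminf_ennreal_single) (auto simp: mem_return_time_eq_iff)
    with True \<open>returns U A x\<close> show ?thesis
      by (simp add: induced_map_def mem_return_time_eq_iff)
  qed (simp add: induced_map_def return_time_eq_def)
qed

lemma nn_integral_induced_map:
  assumes h [measurable]: "h \<in> borel_measurable M"
  shows "(\<integral>\<^sup>+ x. h (induced_map U A x) \<partial>M) = (\<integral>\<^sup>+ x. h x \<partial>M)"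
proof -
  have "(\<integral>\<^sup>+ x. h (induced_map U A x) \<partial>M)
      = (\<integral>\<^sup>+ x. indicator (- A) x * h x
           + (\<Sum>n. indicator (return_time_eq U A n) x * h ((U ^^ n) x)) \<partial>M)"
    by (rule nn_integral_cong_AE[OF AE_induced_map_decomposition])
  also have "\<dots> = (\<integral>\<^sup>+ x. indicator (- A) x * h x \<partial>M)
        + (\<Sum>n. \<integral>\<^sup>+ x. indicator (return_time_eq U A n) x * h ((U ^^ n) x) \<partial>M)"
    by (simp add: nn_integral_add nn_integral_suminf)
  also have "(\<Sum>n. \<integral>\<^sup>+ x. indicator (return_time_eq U A n) x * h ((U ^^ n) x) \<partial>M)
      = (\<integral>\<^sup>+ x. indicator A x * h x \<partial>M)"
    unfolding suminf_nn_integral_funpow_transfer[OF sets_return_time_eq h]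
    by (rule nn_integral_cong_AE)
       (use AE_suminf_indicator_return_time_eq in \<open>eventually_elim, simp\<close>)
  also have "(\<integral>\<^sup>+ x. indicator (- A) x * h x \<partial>M) + (\<integral>\<^sup>+ x. indicator A x * h x \<partial>M)
      = (\<integral>\<^sup>+ x. h x \<partial>M)"
    by (subst nn_integral_add[symmetric]) (auto intro!: nn_integral_cong simp: indicator_def)
  finally show ?thesis .
qed

lemma distr_induced_map: "distr M M (induced_map U A) = M"
proof (rule measure_eqI)
  fix B assume "B \<in> sets (distr M M (induced_map U A))"
  then have [measurable]: "B \<in> sets M" by simp
  have "emeasure (distr M M (induced_map U A)) B = (\<integral>\<^sup>+ x. indicator B x \<partial>distr M M (induced_map U A))"
    by simp
  also have "\<dots> = (\<integral>\<^sup>+ x. indicator B (induced_map U A x) \<partial>M)"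
    by (rule nn_integral_distr) measurable
  also have "\<dots> = (\<integral>\<^sup>+ x. indicator B x \<partial>M)"
    by (rule nn_integral_induced_map) measurable
  also have "\<dots> = emeasure M B"
    by simp
  finally show "emeasure (distr M M (induced_map U A)) B = emeasure M B" .
qed simp

lemma AE_induced_map_inverse: "AE x in M. induced_map V A (induced_map U A x) = x"
  using poincare_recurrence[OF A] mp_automorphism.AE_funpow_U_funpow_V[OF mp_automorphism_inverse]
proof eventually_elim
  case (elim x)
  show ?case
  proof (cases "x \<in> A")
    case True
    with elim(1) have returns: "returns U A x" by blast
    define n where "n = return_time U A x"
    note n = returnsD[OF returns, folded n_def]
    define y where "y = (U ^^ n) x"
    have V_y: "(V ^^ k) y = (U ^^ (n - k)) x" if "k \<le> n" for k
      using elim(2) that unfolding y_def by simp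
    have V_n: "(V ^^ n) y \<in> A" using V_y[of n] True by simp
    have V_k: "(V ^^ k) y \<notin> A" if "k \<in> {1..<n}" for k
    proof -
      have "n - k \<in> {1..<n}" "k \<le> n" using that by auto
      then show ?thesis using V_y n(3) by metis
    qed
    have "y \<in> A" "induced_map U A x = y"
      using n(2) True returns by (simp_all add: y_def n_def induced_map_def)
    with return_timeI[OF n(1) V_n V_k] show ?thesis using V_y[of n] by (simp add: induced_map_def)
  qed (simp add: induced_map_def)
qed

lemma mp_automorphism_induced_map: "mp_automorphism M (induced_map U A) (induced_map V A)"
  by unfold_locales
     (simp_all add: distr_induced_map AE_induced_map_inverse
                    mp_automorphism.measurable_induced_map[OF mp_automorphism_inverse A]
                    mp_automorphism.AE_induced_map_inverse[OF mp_automorphism_inverse A])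

lemma measurable_return_cocycle [measurable]:
  assumes [measurable]: "c \<in> M \<rightarrow>\<^sub>M count_space UNIV"
  shows "return_cocycle U A c \<in> M \<rightarrow>\<^sub>M count_space UNIV"
proof -
  have [measurable]: "(\<lambda>x. \<Sum>i<n. c ((U ^^ i) x)) \<in> M \<rightarrow>\<^sub>M count_space UNIV" for n
    by (induction n) simp_all
  have [measurable]: "(\<lambda>x. \<Sum>i<return_time U A x. c ((U ^^ i) x)) \<in> M \<rightarrow>\<^sub>M count_space UNIV"
    by (rule measurable_compose_countable[where f = "\<lambda>n x. \<Sum>i<n. c ((U ^^ i) x)"]) measurable
  show ?thesis unfolding return_cocycle_def[abs_def] by measurable
qed

lemma nn_integral_return_cocycle_le:
  fixes g :: "int \<Rightarrow> ennreal"
  assumes [measurable]: "c \<in> M \<rightarrow>\<^sub>M count_space UNIV"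
    and g: "g 0 = 0" "\<And>a b. g (a + b) \<le> g a + g b"
  shows "(\<integral>\<^sup>+ x. g (return_cocycle U A c x) \<partial>M) \<le> (\<integral>\<^sup>+ x. g (c x) \<partial>M)"
proof -
  have [measurable]: "(\<lambda>x. g (c x)) \<in> borel_measurable M"
    by (rule measurable_compose[of c _ "count_space UNIV"]) simp_all
  have pointwise: "g (return_cocycle U A c x)
      \<le> (\<Sum>i. indicator (return_time_gt U A i) x * g (c ((U ^^ i) x)))" for x
  proof (cases "x \<in> A \<and> returns U A x")
    case True
    have "g (return_cocycle U A c x) \<le> (\<Sum>i<return_time U A x. g (c ((U ^^ i) x)))"
      using True subadditive_sum_le[of g, OF g] by (simp add: return_cocycle_def)
    also have "\<dots> = (\<Sum>i<return_time U A x. indicator (return_time_gt U A i) x * g (c ((U ^^ i) x)))"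
      using True by (intro sum.cong refl) (simp add: return_time_gt_if_less_return_time)
    also have "\<dots> \<le> (\<Sum>i. indicator (return_time_gt U A i) x * g (c ((U ^^ i) x)))"
      by (rule sum_le_suminf) auto
    finally show ?thesis .
  qed (auto simp: return_cocycle_def g(1))
  have "(\<integral>\<^sup>+ x. g (return_cocycle U A c x) \<partial>M)
      \<le> (\<Sum>i. \<integral>\<^sup>+ x. indicator (return_time_gt U A i) x * g (c ((U ^^ i) x)) \<partial>M)"
    by (simp add: nn_integral_mono pointwise nn_integral_suminf[symmetric])
  also have "\<dots> = (\<integral>\<^sup>+ y. (\<Sum>i. indicator (return_time_gt U A i) ((V ^^ i) y)) * g (c y) \<partial>M)"
    by (rule suminf_nn_integral_funpow_transfer) measurable
  also have "\<dots> \<le> (\<integral>\<^sup>+ y. g (c y) \<partial>M)"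
    by (rule nn_integral_mono_AE)
       (use AE_suminf_indicator_return_time_gt in \<open>eventually_elim, metis mult_1 mult_right_mono zero_le\<close>)
  finally show ?thesis .
qed

end

lemma AE_int_iter_eq_return_cocycle:
  assumes "AE x in M. orbit_left_inverse W T x" and "AE x in M. int_iter_eq T (c x) x (U x)"
  shows "AE x in M. int_iter_eq T (return_cocycle U A c x) x (induced_map U A x)"
proof -
  have "AE x in M. orbit_left_inverse W T ((U ^^ i) x)
                    \<and> int_iter_eq T (c ((U ^^ i) x)) ((U ^^ i) x) (U ((U ^^ i) x))" for i
    using AE_funpow_U[OF assms(1), of i] AE_funpow_U[OF assms(2), of i] by eventually_elim simp
  then have "AE x in M. \<forall>i. orbit_left_inverse W T ((U ^^ i) x)
                    \<and> int_iter_eq T (c ((U ^^ i) x)) ((U ^^ i) x) (U ((U ^^ i) x))"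
    by (simp add: AE_all_countable)
  then show ?thesis
  proof eventually_elim
    case (elim x)
    have shift: "orbit_shift T (\<Sum>i<n. c ((U ^^ i) x)) x ((U ^^ n) x)" for n
    proof (induction n)
      case (Suc n)
      then show ?case
        using orbit_shift_trans int_iter_eq_imp_orbit_shift elim by fastforce
    qed (simp add: orbit_shift_refl)
    have "orbit_left_inverse W T ((U ^^ n) x)" for n
      using elim by blast
    then have "int_iter_eq T (\<Sum>i<n. c ((U ^^ i) x)) x ((U ^^ n) x)" for n
      using orbit_shift_imp_int_iter_eq[OF _ _ shift] funpow_0 by metis
    then show ?case
      by (simp add: return_cocycle_def induced_map_def)
  qed
qed

end

lemma finite_measure_X\<mu>: "finite_measure X\<mu>"
  by (rule finite_measureI) (simp add: X\<mu>_def emeasure_restrict_space space_restrict_space)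

lemma Aut_iff_mp_automorphism: "U \<in> Aut \<longleftrightarrow> (\<exists>V. mp_automorphism X\<mu> U V)"
  using finite_measure_X\<mu>
  unfolding Aut_def mp_automorphism_def mp_automorphism_axioms_def by auto

lemma is_cocycle_iff:
  "is_cocycle T U c \<longleftrightarrow>
     c \<in> X\<mu> \<rightarrow>\<^sub>M count_space UNIV \<and> (AE x in X\<mu>. int_iter_eq T (c x) x (U x))"
  unfolding is_cocycle_def int_iter_eq_def by simp

lemma is_cocycle_cocycle: "is_cocycle T U c \<Longrightarrow> is_cocycle T U (cocycle T U)"
  unfolding cocycle_def by (rule someI[of "is_cocycle T U" c])

lemma cocycle_AE_eq:
  assumes "T \<in> Aut" and "aperiodic T" and c: "is_cocycle T U c"
  shows "AE x in X\<mu>. cocycle T U x = c x"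
proof -
  obtain W where "mp_automorphism X\<mu> T W" using assms(1) Aut_iff_mp_automorphism by blast
  then have "AE x in X\<mu>. orbit_left_inverse W T x"
    by (rule mp_automorphism.AE_orbit_left_inverse)
  moreover have "AE x in X\<mu>. \<forall>n\<ge>1. (T ^^ n) x \<noteq> x"
    using assms(2) unfolding aperiodic_def AE_all_countable by (auto intro: AE_impI)
  moreover have "AE x in X\<mu>. int_iter_eq T (cocycle T U x) x (U x)"
    using is_cocycle_cocycle[OF c] by (simp add: is_cocycle_iff)
  moreover have "AE x in X\<mu>. int_iter_eq T (c x) x (U x)"
    using c by (simp add: is_cocycle_iff)
  ultimately show ?thesis by eventually_elim (rule int_iter_eq_unique)
qed

lemma d_phi_id_eq:
  assumes "T \<in> Aut" and "aperiodic T" and "is_cocycle T U c"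
  shows "d_phi \<phi> T U id = (\<integral>\<^sup>+ x. ennreal (\<phi> (real_of_int \<bar>c x\<bar>)) \<partial>X\<mu>)"
proof -
  have "is_cocycle T id (\<lambda>_. 0)" by (simp add: is_cocycle_iff)
  then have id: "AE x in X\<mu>. cocycle T id x = 0" by (rule cocycle_AE_eq[OF assms(1,2)])
  have U: "AE x in X\<mu>. cocycle T U x = c x" by (rule cocycle_AE_eq[OF assms])
  show ?thesis
    unfolding d_phi_def by (rule nn_integral_cong_AE) (use id U in \<open>eventually_elim, simp\<close>)
qed

lemma metric_compatible_abs_subadditive:
  assumes "metric_compatible \<phi>"
  shows "ennreal (\<phi> (real_of_int \<bar>a + b\<bar>))
       \<le> ennreal (\<phi> (real_of_int \<bar>a\<bar>)) + ennreal (\<phi> (real_of_int \<bar>b\<bar>))"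
proof -
  have nonneg: "\<phi> t \<ge> 0" if "t \<ge> 0" for t
    using assms that unfolding metric_compatible_def by (cases "t = 0") auto
  have "\<phi> (real_of_int \<bar>a + b\<bar>) \<le> \<phi> (real_of_int \<bar>a\<bar> + real_of_int \<bar>b\<bar>)"
    using assms unfolding metric_compatible_def by (simp add: abs_triangle_ineq)
  also have "\<dots> \<le> \<phi> (real_of_int \<bar>a\<bar>) + \<phi> (real_of_int \<bar>b\<bar>)"
    using assms unfolding metric_compatible_def by simp
  finally show ?thesis
    using nonneg by (simp add: ennreal_plus[symmetric] ennreal_leI del: ennreal_plus)
qed

lemma full_group_phi_iff:
  assumes "T \<in> Aut" and "aperiodic T"
  shows "U \<in> full_group_phi \<phi> T \<longleftrightarrow> U \<in> full_group T \<and> d_phi \<phi> T U id < \<infinity>"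
  using d_phi_id_eq[OF assms is_cocycle_cocycle]
  unfolding full_group_phi_def full_group_def by auto

lemma is_cocycle_first_return:
  assumes "T \<in> Aut" and "U \<in> Aut" and "is_cocycle T U c" and "A \<in> sets X\<mu>"
  shows "is_cocycle T (first_return U A) (return_cocycle U A c)"
proof -
  obtain V where U: "mp_automorphism X\<mu> U V" using assms(2) Aut_iff_mp_automorphism by blast
  obtain W where T: "mp_automorphism X\<mu> T W" using assms(1) Aut_iff_mp_automorphism by blast
  show ?thesis
    using assms(3) mp_automorphism.measurable_return_cocycle[OF U assms(4)]
      mp_automorphism.AE_int_iter_eq_return_cocycle[OF U mp_automorphism.AE_orbit_left_inverse[OF T]]
    by (simp add: is_cocycle_iff first_return_eq_induced_map)
qed

lemma first_return_in_full_group: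
  assumes "T \<in> Aut" and "U \<in> full_group T" and "A \<in> sets X\<mu>"
  shows "first_return U A \<in> full_group T"
proof -
  obtain c where "U \<in> Aut" and c: "is_cocycle T U c" using assms(2) by (auto simp: full_group_def)
  then obtain V where "mp_automorphism X\<mu> U V" using Aut_iff_mp_automorphism by blast
  then have "first_return U A \<in> Aut"
    using mp_automorphism.mp_automorphism_induced_map[OF _ assms(3)]
    by (auto simp: Aut_iff_mp_automorphism first_return_eq_induced_map)
  with is_cocycle_first_return[OF assms(1) \<open>U \<in> Aut\<close> c assms(3)] show ?thesis
    unfolding full_group_def by blast
qed

lemma d_phi_first_return_le:
  assumes "T \<in> Aut" and "aperiodic T" and "metric_compatible \<phi>"
    and "U \<in> full_group T" and "A \<in> sets X\<mu>"
  shows "d_phi \<phi> T (first_return U A) id \<le> d_phi \<phi> T U id"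
proof -
  obtain c where "U \<in> Aut" and c: "is_cocycle T U c" using assms(4) by (auto simp: full_group_def)
  then obtain V where U: "mp_automorphism X\<mu> U V" using Aut_iff_mp_automorphism by blast
  have c_UA: "is_cocycle T (first_return U A) (return_cocycle U A c)"
    by (rule is_cocycle_first_return[OF assms(1) \<open>U \<in> Aut\<close> c assms(5)])
  show ?thesis
    unfolding d_phi_id_eq[OF assms(1,2) c_UA] d_phi_id_eq[OF assms(1,2) c]
    using c assms(3,5) metric_compatible_abs_subadditive
    by (intro mp_automorphism.nn_integral_return_cocycle_le[OF U])
       (auto simp: is_cocycle_iff metric_compatible_def)
qed

theorem mainTheorem14:
  assumes "T \<in> Aut" and "aperiodic T" and "metric_compatible \<phi>"
    and "U \<in> full_group_phi \<phi> T" and "A \<in> sets X\<mu>"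
  shows "d_phi \<phi> T (first_return U A) id \<le> d_phi \<phi> T U id
         \<and> first_return U A \<in> full_group_phi \<phi> T"
proof -
  have U: "U \<in> full_group T" "d_phi \<phi> T U id < \<infinity>"
    using assms(4) full_group_phi_iff[OF assms(1,2)] by auto
  have le: "d_phi \<phi> T (first_return U A) id \<le> d_phi \<phi> T U id"
    by (rule d_phi_first_return_le[OF assms(1-3) U(1) assms(5)])
  moreover have "first_return U A \<in> full_group T"
    by (rule first_return_in_full_group[OF assms(1) U(1) assms(5)])
  ultimately show ?thesis
    using U(2) full_group_phi_iff[OF assms(1,2)] by (auto intro: le_less_trans)
qed

end
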